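(* Let $h_1,h_2,h_3$ be integers with $p\nmid h_1h_2h_3$, let $e_1,e_2,e_3\in\{-1,1\}$, and assume $k_1,k_2,k_3>0$ with $k_1+k_2+k_3<d$. For $i=1,2,3$ let $\alpha_i\in\mathbb{F}_{q^{k_i}}$ have minimal polynomial $g_i$ over $\mathbb{F}_q$ of degree $u_i$. Then \[m:=\left\langle\psi(e_1h_1\mathrm{tr}_{k_1}f(\alpha_1)+e_2h_2\mathrm{tr}_{k_2}f(\alpha_2)+e_3h_3\mathrm{tr}_{k_3}f(\alpha_3))\right\rangle\] equals $1$ in each of the following cases: (i) $g_1=g_2=g_3$, $p\mid\frac{e_1h_1k_1+e_2h_2k_2+e_3h_3k_3}{u_1}$ and $p\nmid\frac{k_1k_2k_3}{u_1u_2u_3}$; (ii) for some permutation $(j_1,j_2,j_3)$ of $(1,2,3)$: $g_{j_1}=g_{j_2}$, $p\mid\frac{e_{j_1}h_{j_1}k_{j_1}+e_{j_2}h_{j_2}k_{j_2}}{u_{j_1}}$, $p\nmid\frac{k_{j_1}k_{j_2}}{u_{j_1}u_{j_2}}$, and $p\mid\frac{k_{j_3}}{u_{j_3}}$; (iii) $p\mid\frac{k_i}{u_i}$ for $i=1,2,3$. Otherwise $m=0$.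
   Context: $p$ odd prime, $q$ a power of $p$, $d$ a positive integer not divisible by $p$. $\mathrm{tr}_n:\mathbb{F}_{q^n}\to\mathbb{F}_p$ absolute trace; $\psi$ a fixed nontrivial additive character of $\mathbb{F}_p$. $\langle\cdot\rangle$ is the uniform average over $f\in\mathcal{F}_d'=\{a_dX^d+\dots+a_0\in\mathbb{F}_q[X]:a_d\ne0,\ a_{pk}=0\text{ for }1\le k\le\lfloor d/p\rfloor\}$. *)

theory Defs
  imports Complex_Main "HOL-Computational_Algebra.Polynomial"
begin

(* The subfield F_m = {x. x^m = x} of an ambient finite field (m a power of the characteristic). *)
definition subfield_of_card :: "nat \<Rightarrow> 'a::field set" where
  "subfield_of_card m = {x. x ^ m = x}"

(* Absolute trace tr_n : F_{q^n} -> F_p, where q = p^r:  tr_n(x) = sum_{j < r n} x^(p^j). *)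
definition abs_tr :: "nat \<Rightarrow> nat \<Rightarrow> nat \<Rightarrow> 'a::field \<Rightarrow> 'a" where
  "abs_tr p r n x = (\<Sum>j < r * n. x ^ (p ^ j))"

definition minpoly_over :: "'a::field set \<Rightarrow> 'a \<Rightarrow> 'a poly" where
  "minpoly_over F \<alpha> = (THE g. lead_coeff g = 1 \<and> (\<forall>i. coeff g i \<in> F) \<and> poly g \<alpha> = 0 \<and>
      (\<forall>h. h \<noteq> 0 \<and> (\<forall>i. coeff h i \<in> F) \<and> poly h \<alpha> = 0 \<longrightarrow> degree g \<le> degree h))"

definition Fd' :: "nat \<Rightarrow> nat \<Rightarrow> nat \<Rightarrow> 'a::field poly set" where
  "Fd' p q d = {f. degree f = d \<and> (\<forall>i. coeff f i \<in> subfield_of_card q) \<and>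
      (\<forall>k. 1 \<le> k \<and> k \<le> d div p \<longrightarrow> coeff f (p * k) = 0)}"

definition avg_Fd' :: "nat \<Rightarrow> nat \<Rightarrow> nat \<Rightarrow> ('a::field poly \<Rightarrow> complex) \<Rightarrow> complex" where
  "avg_Fd' p q d X = (\<Sum>f \<in> Fd' p q d. X f) / of_nat (card (Fd' p q d :: 'a poly set))"

definition nontriv_add_char :: "nat \<Rightarrow> ('a::field \<Rightarrow> complex) \<Rightarrow> bool" where
  "nontriv_add_char p \<psi> \<longleftrightarrow>
     (\<forall>x \<in> subfield_of_card p. \<psi> x \<noteq> 0) \<and>
     (\<forall>x \<in> subfield_of_card p. \<forall>y \<in> subfield_of_card p. \<psi> (x + y) = \<psi> x * \<psi> y) \<and>
     (\<exists>x \<in> subfield_of_card p. \<psi> x \<noteq> 1)"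

end

theory Submission
  imports Defs
begin

(* The map Phi f = sum_i e_i h_i tr_(k_i) f(alpha_i) is additive and F_p-linear with values in F_p.
   Every f in F_d' is uniquely a X^d + g with a <> 0 and g in the group V of admissible
   polynomials of degree < d, so by orthogonality of characters the average is 1 if Phi vanishes
   on V and 0 otherwise.

   Vanishing on V is the same as vanishing on all of F_q[X]: b^p X^(p j) has the same image as
   b X^j because the trace is invariant under p-th powers, and as k_1 + k_2 + k_3 < d every f
   agrees on the Frobenius orbits of the alpha_i with a polynomial of degree < d.  On F_q[X] one
   has tr_(k_i) f(alpha_i) = (k_i / u_i) tr_(u_i) f(alpha_i), conjugate points give equal traces,
   and Frobenius-compatible values can be prescribed independently on distinct orbits by
   interpolation.  Hence Phi = 0 iff for every orbit the sum of the e_i h_i k_i / u_i over the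
   alpha_i in it is divisible by p.  As p does not divide the h_i, going through the possible
   coincidences among the minimal polynomials g_i gives the cases (i)-(iii). *)

lemma mem_subfield_of_card_iff [simp]: "x \<in> subfield_of_card m \<longleftrightarrow> x ^ m = x"
  by (simp add: subfield_of_card_def)

section \<open>Frobenius in prime characteristic\<close>

lemma CHAR_eq_prime_of_card:
  fixes p N :: nat
  assumes "prime p" and "card (UNIV :: 'a::{finite,field} set) = p ^ N"
  shows "CHAR('a) = p"
proof -
  have "(\<Sum>x\<in>(UNIV :: 'a set). x + 1) = (\<Sum>x\<in>UNIV. x)"
    by (rule sum.reindex_bij_witness[of _ "\<lambda>x. x - 1" "\<lambda>x. x + 1"]) auto
  then have "of_nat (card (UNIV :: 'a set)) = (0 :: 'a)"
    by (simp add: sum.distrib)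
  then have "CHAR('a) dvd p ^ N"
    using assms(2) by (metis of_nat_eq_0_iff_char_dvd)
  moreover have "prime CHAR('a)"
    by (rule prime_CHAR_semidom) (simp add: finite_imp_CHAR_pos)
  ultimately show ?thesis
    using assms(1) prime_dvd_power primes_dvd_imp_eq by blast
qed

lemma frobenius_diff:
  fixes x y :: "'a::comm_ring_1"
  assumes "prime CHAR('a)" and "Q = CHAR('a) ^ s"
  shows "(x - y) ^ Q = x ^ Q - y ^ Q"
proof -
  have "x ^ Q = ((x - y) + y) ^ Q"
    by simp
  also have "\<dots> = (x - y) ^ Q + y ^ Q"
    by (rule freshmans_dream'[OF assms])
  finally show ?thesis
    by simp
qed

lemma frobenius_inj:
  assumes "prime CHAR('a::field)" and "Q = CHAR('a) ^ s"
  shows "inj (\<lambda>x::'a. x ^ Q)"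
proof (rule injI)
  fix x y :: 'a
  assume "x ^ Q = y ^ Q"
  then have "(x - y) ^ Q = 0"
    by (simp add: frobenius_diff[OF assms])
  then show "x = y"
    by simp
qed

lemma power_power_fixed: "(x::'a::monoid_mult) ^ Q = x \<Longrightarrow> x ^ (Q ^ s) = x"
  by (induction s) (simp_all add: power_mult)

lemma power_power_add: "(x::'a::monoid_mult) ^ (Q ^ (s + t)) = (x ^ (Q ^ s)) ^ (Q ^ t)"
  by (simp add: power_add power_mult)

lemma power_power_mult_period: "(x::'a::monoid_mult) ^ (Q ^ L) = x \<Longrightarrow> x ^ (Q ^ (L * t)) = x"
  by (induction t) (simp_all add: power_add power_mult)

lemma power_power_mod:
  assumes "(x::'a::monoid_mult) ^ (Q ^ L) = x"
  shows "x ^ (Q ^ s) = x ^ (Q ^ (s mod L))"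
proof -
  have "x ^ (Q ^ s) = x ^ (Q ^ (L * (s div L) + s mod L))"
    by simp
  also have "\<dots> = (x ^ (Q ^ (L * (s div L)))) ^ (Q ^ (s mod L))"
    by (rule power_power_add)
  finally show ?thesis
    using power_power_mult_period[OF assms] by simp
qed

lemma poly_map_frobenius:
  fixes f :: "'a::idom poly"
  assumes "prime CHAR('a)" and "Q = CHAR('a) ^ s"
  shows "poly (map_poly (\<lambda>c. c ^ Q) f) (x ^ Q) = poly f x ^ Q"
proof -
  have Q_pos: "Q > 0"
    using assms prime_gt_0_nat by simp
  have "poly f x ^ Q = (\<Sum>i\<le>degree f. (coeff f i * x ^ i) ^ Q)"
    unfolding poly_altdef by (rule freshmans_dream_sum'[OF assms])
  also have "\<dots> = (\<Sum>i\<le>degree f. coeff f i ^ Q * (x ^ Q) ^ i)"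
    by (simp add: power_mult_distrib flip: power_mult add: mult.commute)
  also have "\<dots> = poly (map_poly (\<lambda>c. c ^ Q) f) (x ^ Q)"
    using Q_pos by (simp add: poly_altdef degree_map_poly coeff_map_poly)
  finally show ?thesis
    by simp
qed

lemma poly_frobenius:
  fixes f :: "'a::idom poly"
  assumes "prime CHAR('a)" and "Q = CHAR('a) ^ s" and "\<forall>i. coeff f i ^ Q = coeff f i"
  shows "poly f (x ^ Q) = poly f x ^ Q"
proof -
  have "map_poly (\<lambda>c. c ^ Q) f = f"
    using assms prime_gt_0_nat by (intro poly_eqI) (simp add: coeff_map_poly)
  then show ?thesis
    using poly_map_frobenius[OF assms(1,2)] by metis
qed

lemma of_int_power_CHAR:
  assumes "prime CHAR('a::comm_ring_1)"
  shows "(of_int z :: 'a) ^ CHAR('a) = of_int z"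
proof -
  have of_nat: "(of_nat m :: 'a) ^ CHAR('a) = of_nat m" for m
  proof (induction m)
    case 0
    then show ?case
      using prime_gt_0_nat[OF assms] by (simp add: power_0_left)
  next
    case (Suc m)
    then show ?case
      using freshmans_dream'[OF assms, of "CHAR('a)" 1 1 "of_nat m"] by simp
  qed
  have "(of_int z :: 'a) = of_nat (nat z) - of_nat (nat (- z))"
    by (cases "z \<ge> 0") simp_all
  then show ?thesis
    using frobenius_diff[OF assms, of _ 1] of_nat by simp
qed

section \<open>Finite fields\<close>

(* The library's finite_field_power_card_eq_same needs the sort finite_field. *)
lemma field_power_card_eq_same:
  fixes x :: "'a::{finite,field}"
  shows "x ^ card (UNIV :: 'a set) = x"
proof (cases "x = 0")
  case True
  then show ?thesis
    using finite_UNIV_card_ge_0[where ?'a = 'a] by simp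
next
  case False
  let ?N = "UNIV - {0 :: 'a}"
  have "x ^ card ?N * (\<Prod>y\<in>?N. y) = (\<Prod>y\<in>?N. x * y)"
    by (simp add: prod.distrib)
  also have "\<dots> = 1 * (\<Prod>y\<in>?N. y)"
    using False by (simp, intro prod.reindex_bij_witness[of _ "\<lambda>y. y / x" "\<lambda>y. x * y"]) auto
  finally have "x ^ card ?N = 1"
    by (rule mult_right_cancel[THEN iffD1, rotated]) simp
  then have "x * x ^ card ?N = x"
    by simp
  then show ?thesis
    using card_Suc_Diff1[of "UNIV :: 'a set" 0] by (metis finite_class.finite_UNIV UNIV_I power_Suc)
qed

lemma frobenius_poly_dvd:
  assumes "prime CHAR('a::comm_ring_1)" and "N = CHAR('a) ^ s"
  shows "monom (1::'a) N - monom 1 1 dvd monom 1 (N ^ j) - monom 1 1"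
proof (induction j)
  case 0
  then show ?case by simp
next
  case (Suc j)
  let ?D = "monom (1::'a) N - monom 1 1"
  have "?D ^ (N ^ j) = monom 1 (N ^ Suc j) - monom 1 (N ^ j)"
    using assms by (subst frobenius_diff[where s = "s * j"]) (simp_all add: monom_power power_mult)
  then have "monom 1 (N ^ Suc j) - monom 1 1 = ?D ^ (N ^ j) + (monom 1 (N ^ j) - monom 1 1)"
    by simp
  moreover have "?D dvd ?D ^ (N ^ j)"
    using assms prime_gt_0_nat by simp
  ultimately show ?case
    using Suc.IH by (metis dvd_add)
qed

lemma degree_monom_diff_X:
  assumes "L \<ge> 2"
  shows "degree (monom (1::'a::comm_ring_1) L - monom 1 1) = L"
  using assms by (intro antisym degree_diff_le le_degree)
    (auto simp: coeff_monom intro: order.trans[OF degree_monom_le])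

lemma card_roots_of_dvd_field_poly:
  fixes D :: "'a::{finite,field} poly"
  assumes "D dvd monom 1 (card (UNIV :: 'a set)) - monom 1 1"
  shows "card {x. poly D x = 0} = degree D"
proof -
  let ?M = "card (UNIV :: 'a set)"
  have "card {0, 1 :: 'a} \<le> ?M"
    by (rule card_mono) auto
  then have "?M \<ge> 2"
    by simp
  obtain H where H: "monom 1 ?M - monom 1 1 = D * H"
    using assms by (auto elim: dvdE)
  have "monom (1::'a) ?M - monom 1 1 \<noteq> 0"
    using degree_monom_diff_X[OF \<open>?M \<ge> 2\<close>, where 'a = 'a] \<open>?M \<ge> 2\<close>
    by (metis degree_0 not_numeral_le_zero)
  then have "D \<noteq> 0" and "H \<noteq> 0"
    using H by auto
  have "?M = degree D + degree H"
    using H degree_monom_diff_X[OF \<open>?M \<ge> 2\<close>, where 'a = 'a] degree_mult_eq[OF \<open>D \<noteq> 0\<close> \<open>H \<noteq> 0\<close>]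
    by simp
  \<comment> \<open>every element is a root of \<open>X^M - X\<close>, hence of D or of its cofactor H\<close>
  have "UNIV \<subseteq> {x. poly D x = 0} \<union> {x. poly H x = 0}"
  proof
    fix x :: 'a
    have "poly (monom 1 ?M - monom 1 1) x = 0"
      using field_power_card_eq_same[of x] by (simp add: poly_monom)
    then show "x \<in> {x. poly D x = 0} \<union> {x. poly H x = 0}"
      by (simp only: H poly_mult mult_eq_0_iff mem_Collect_eq Un_iff)
  qed
  then have "?M \<le> card ({x. poly D x = 0} \<union> {x. poly H x = 0})"
    by (intro card_mono) simp_all
  also have "\<dots> \<le> card {x. poly D x = 0} + card {x. poly H x = 0}"
    by (rule card_Un_le)
  finally have "degree D \<le> card {x. poly D x = 0}"
    using card_poly_roots_bound[OF \<open>H \<noteq> 0\<close>] \<open>?M = degree D + degree H\<close> by simp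
  then show ?thesis
    using card_poly_roots_bound[OF \<open>D \<noteq> 0\<close>] by simp
qed

lemma card_subfield_of_card:
  fixes N s t :: nat
  assumes "prime CHAR('a::{finite,field})" and "N = CHAR('a) ^ s" and "s > 0"
    and "card (UNIV :: 'a set) = N ^ t"
  shows "card (subfield_of_card N :: 'a set) = N"
proof -
  have "CHAR('a) ^ 1 \<le> CHAR('a) ^ s"
    using assms prime_gt_0_nat[OF assms(1)] by (intro power_increasing) auto
  then have "N \<ge> 2"
    using assms(2) prime_ge_2_nat[OF assms(1)] by simp
  have "{x. poly (monom 1 N - monom 1 1) x = 0} = (subfield_of_card N :: 'a set)"
    by (auto simp: poly_monom)
  moreover have "monom (1::'a) N - monom 1 1 dvd monom 1 (card (UNIV :: 'a set)) - monom 1 1"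
    using frobenius_poly_dvd[OF assms(1,2), of t] assms(4) by simp
  ultimately show ?thesis
    using card_roots_of_dvd_field_poly degree_monom_diff_X[OF \<open>N \<ge> 2\<close>] by metis
qed

lemma abs_tr_nonzero_exists:
  fixes p r m n :: nat
  assumes "prime p" and "CHAR('a::{finite,field}) = p" and "r > 0" and "m > 0"
    and "card (UNIV :: 'a set) = (p ^ r) ^ n" and "m dvd n"
  shows "\<exists>y::'a. y \<in> subfield_of_card ((p ^ r) ^ m) \<and> abs_tr p r m y \<noteq> 0"
proof -
  define T :: "'a poly" where "T = (\<Sum>j<r * m. monom 1 (p ^ j))"
  have p_ge_2: "p \<ge> 2"
    using assms(1) prime_ge_2_nat by blast
  have rm_pos: "r * m > 0"
    using assms by simp
  have degree_T: "degree T \<le> p ^ (r * m - 1)"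
    unfolding T_def using p_ge_2
    by (intro degree_sum_le) (auto intro!: order.trans[OF degree_monom_le] power_increasing)
  have "coeff T (p ^ (r * m - 1)) = (\<Sum>j<r * m. if j = r * m - 1 then 1 else 0)"
    unfolding T_def coeff_sum using p_ge_2 by (intro sum.cong) auto
  then have "T \<noteq> 0"
    using rm_pos by auto
  have "card {y. poly T y = 0} \<le> p ^ (r * m - 1)"
    using card_poly_roots_bound[OF \<open>T \<noteq> 0\<close>] degree_T by simp
  also have "\<dots> < p ^ (r * m)"
    using p_ge_2 rm_pos by (intro power_strict_increasing) auto
  also have "\<dots> = card (subfield_of_card ((p ^ r) ^ m) :: 'a set)"
  proof -
    obtain t where "n = m * t"
      using assms(6) by blast
    then have "card (UNIV :: 'a set) = ((p ^ r) ^ m) ^ t"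
      using assms(5) by (simp add: power_mult)
    then show ?thesis
      using card_subfield_of_card[where 'a = 'a, of "(p ^ r) ^ m" "r * m" t] assms rm_pos by (simp add: power_mult)
  qed
  finally have "\<not> subfield_of_card ((p ^ r) ^ m) \<subseteq> {y::'a. poly T y = 0}"
    using card_mono[OF poly_roots_finite[OF \<open>T \<noteq> 0\<close>]] by (metis not_le)
  moreover have "poly T y = abs_tr p r m y" for y
    unfolding T_def abs_tr_def poly_sum by (simp add: poly_monom)
  ultimately show ?thesis
    by auto
qed

lemma finite_degree_less: "finite {g :: 'a::{finite,zero} poly. degree g < d}"
proof -
  have "{g :: 'a poly. degree g < d} \<subseteq> Poly ` {xs. length xs \<le> d}"
  proof
    fix g :: "'a poly"
    assume "g \<in> {g. degree g < d}"
    then have "length (coeffs g) \<le> d"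
      by (cases "g = 0") (auto simp: length_coeffs)
    then show "g \<in> Poly ` {xs. length xs \<le> d}"
      by (intro image_eqI[of _ _ "coeffs g"]) auto
  qed
  moreover have "finite (Poly ` {xs :: 'a list. length xs \<le> d})"
    using finite_lists_length_le[of "UNIV :: 'a set" d] by simp
  ultimately show ?thesis
    by (rule finite_subset)
qed

section \<open>Interpolation\<close>

lemma interpolating_poly_exists:
  fixes A :: "'a::field set"
  assumes "finite A" and "A \<noteq> {}"
  shows "\<exists>L. (\<forall>a\<in>A. poly L a = \<phi> a) \<and> degree L < card A"
  using assms
proof (induction A rule: finite_ne_induct)
  case (singleton a)
  then show ?case
    by (intro exI[of _ "[:\<phi> a:]"]) auto
next
  case (insert a A)
  obtain L where L: "\<forall>x\<in>A. poly L x = \<phi> x" "degree L < card A"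
    using insert.IH by blast
  define M where "M = (\<Prod>x\<in>A. [:-x, 1:])"
  have "degree M = card A"
    unfolding M_def by (subst degree_prod_eq_sum_degree) auto
  have M_roots: "poly M x = 0" if "x \<in> A" for x
    unfolding M_def poly_prod using that insert.hyps(1) by (auto intro!: prod_zero)
  have "poly M a \<noteq> 0"
    unfolding M_def poly_prod using insert.hyps by auto
  define L' where "L' = L + smult ((\<phi> a - poly L a) / poly M a) M"
  have "\<forall>x\<in>insert a A. poly L' x = \<phi> x"
    using L M_roots \<open>poly M a \<noteq> 0\<close> by (auto simp: L'_def)
  moreover have "degree L' < card (insert a A)"
    unfolding L'_def using L(2) \<open>degree M = card A\<close> insert.hyps
    by (intro le_less_trans[OF degree_add_le_max]) (auto intro: le_less_trans[OF degree_smult_le])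
  ultimately show ?case
    by blast
qed

lemma frobenius_interpolating_poly_exists:
  fixes B :: "'a::field set"
  assumes "prime CHAR('a)" and "Q = CHAR('a) ^ s" and "finite B" and "B \<noteq> {}"
    and closed: "\<And>b. b \<in> B \<Longrightarrow> b ^ Q \<in> B"
    and equivariant: "\<And>b. b \<in> B \<Longrightarrow> \<phi> (b ^ Q) = \<phi> b ^ Q"
  shows "\<exists>L. (\<forall>i. coeff L i ^ Q = coeff L i) \<and> (\<forall>b\<in>B. poly L b = \<phi> b) \<and> degree L < card B"
proof -
  obtain L where L: "\<forall>b\<in>B. poly L b = \<phi> b" "degree L < card B"
    using interpolating_poly_exists[OF assms(3,4)] by blast
  let ?frob = "\<lambda>c::'a. c ^ Q"
  have "?frob ` B = B"
    using frobenius_inj[OF assms(1,2)] closed assms(3)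
    by (intro endo_inj_surj) (auto intro: inj_on_subset)
  have Q_pos: "Q > 0"
    using assms(1,2) prime_gt_0_nat by simp
  have "poly (map_poly ?frob L) b = \<phi> b" if "b \<in> B" for b
  proof -
    obtain b' where "b' \<in> B" "b = b' ^ Q"
      using \<open>b \<in> B\<close> \<open>?frob ` B = B\<close> by (metis imageE)
    then show ?thesis
      using poly_map_frobenius[OF assms(1,2)] L(1) equivariant by simp
  qed
  then have "map_poly ?frob L = L"
    using L Q_pos by (intro poly_eqI_degree[of B]) (auto simp: degree_map_poly)
  then have "coeff L i ^ Q = coeff L i" for i
    using Q_pos by (metis coeff_map_poly power_0_left neq0_conv)
  then show ?thesis
    using L by blast
qed

section \<open>Frobenius orbits and minimal polynomials\<close>

definition frob_period :: "nat \<Rightarrow> 'a::monoid_mult \<Rightarrow> nat" where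
  "frob_period Q a = (LEAST l. l > 0 \<and> a ^ (Q ^ l) = a)"

definition frob_orbit :: "nat \<Rightarrow> 'a::monoid_mult \<Rightarrow> 'a set" where
  "frob_orbit Q a = range (\<lambda>s. a ^ (Q ^ s))"

definition orbit_poly :: "nat \<Rightarrow> 'a::comm_ring_1 \<Rightarrow> 'a poly" where
  "orbit_poly Q a = (\<Prod>b\<in>frob_orbit Q a. [:- b, 1:])"

lemma in_frob_orbit_self: "a \<in> frob_orbit Q a"
  unfolding frob_orbit_def by (rule range_eqI[of _ _ 0]) simp

lemma frob_orbit_power_closed:
  assumes "b \<in> frob_orbit Q a"
  shows "b ^ Q \<in> frob_orbit Q a"
proof -
  obtain s where "b = a ^ (Q ^ s)"
    using assms unfolding frob_orbit_def by blast
  then have "b ^ Q = a ^ (Q ^ Suc s)"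
    by (simp add: power_mult[symmetric] mult.commute)
  then show ?thesis
    unfolding frob_orbit_def by blast
qed

lemma frob_orbit_subset:
  assumes "b \<in> frob_orbit Q a"
  shows "frob_orbit Q b \<subseteq> frob_orbit Q a"
proof
  fix x
  assume "x \<in> frob_orbit Q b"
  moreover obtain s where "b = a ^ (Q ^ s)"
    using assms unfolding frob_orbit_def by blast
  ultimately obtain t where "x = a ^ (Q ^ (s + t))"
    unfolding frob_orbit_def by (auto simp: power_power_add)
  then show "x \<in> frob_orbit Q a"
    unfolding frob_orbit_def by blast
qed

context
  fixes Q K e :: nat and a :: "'a::field"
  assumes prime_CHAR: "prime CHAR('a)" and Q_eq: "Q = CHAR('a) ^ e"
    and periodic: "a ^ (Q ^ K) = a" and K_pos: "K > 0"
begin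

lemma frob_period_pos: "frob_period Q a > 0"
  and power_frob_period: "a ^ (Q ^ frob_period Q a) = a"
  using LeastI[of "\<lambda>l. l > 0 \<and> a ^ (Q ^ l) = a" K] periodic K_pos
  unfolding frob_period_def by auto

lemma frob_period_mod_eq:
  assumes "a ^ (Q ^ s) = a ^ (Q ^ t)"
  shows "s mod frob_period Q a = t mod frob_period Q a"
proof -
  let ?l = "frob_period Q a"
  have eq_if_le: "i = j" if "i \<le> j" "j < ?l" "a ^ (Q ^ i) = a ^ (Q ^ j)" for i j
  proof (rule ccontr)
    assume "i \<noteq> j"
    have "(a ^ (Q ^ (j - i))) ^ (Q ^ i) = a ^ (Q ^ i)"
      using that power_power_add[of a Q "j - i" i] by simp
    moreover have "inj (\<lambda>x::'a. x ^ (Q ^ i))"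
      using Q_eq by (intro frobenius_inj[OF prime_CHAR, of _ "e * i"]) (simp add: power_mult)
    ultimately have "a ^ (Q ^ (j - i)) = a"
      by (auto dest: injD)
    moreover have "0 < j - i" "j - i < ?l"
      using that \<open>i \<noteq> j\<close> by auto
    ultimately show False
      using not_less_Least[of "j - i" "\<lambda>l. l > 0 \<and> a ^ (Q ^ l) = a"]
      unfolding frob_period_def by auto
  qed
  have "a ^ (Q ^ (s mod ?l)) = a ^ (Q ^ (t mod ?l))"
    using assms power_power_mod[OF power_frob_period] by metis
  moreover have "s mod ?l < ?l" "t mod ?l < ?l"
    using frob_period_pos by simp_all
  ultimately show ?thesis
    using eq_if_le by (metis nat_le_linear)
qed

lemma frob_period_dvd: "a ^ (Q ^ k) = a \<Longrightarrow> frob_period Q a dvd k"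
  using frob_period_mod_eq[of k 0] by (simp add: mod_eq_0_iff_dvd)

lemma card_frob_orbit: "card (frob_orbit Q a) = frob_period Q a"
  and finite_frob_orbit: "finite (frob_orbit Q a)"
proof -
  let ?l = "frob_period Q a"
  have "frob_orbit Q a = (\<lambda>s. a ^ (Q ^ s)) ` {..<?l}"
  proof
    show "frob_orbit Q a \<subseteq> (\<lambda>s. a ^ (Q ^ s)) ` {..<?l}"
    proof
      fix x
      assume "x \<in> frob_orbit Q a"
      then obtain s where "x = a ^ (Q ^ (s mod ?l))"
        unfolding frob_orbit_def using power_power_mod[OF power_frob_period] by blast
      then show "x \<in> (\<lambda>s. a ^ (Q ^ s)) ` {..<?l}"
        using frob_period_pos by auto
    qed
  qed (auto simp: frob_orbit_def)
  moreover have "inj_on (\<lambda>s. a ^ (Q ^ s)) {..<?l}"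
    using frob_period_mod_eq by (intro inj_onI) fastforce
  ultimately show "card (frob_orbit Q a) = ?l" "finite (frob_orbit Q a)"
    by (simp_all add: card_image)
qed

lemma frob_orbit_eq_if_mem:
  assumes "b \<in> frob_orbit Q a"
  shows "frob_orbit Q b = frob_orbit Q a"
proof
  show "frob_orbit Q b \<subseteq> frob_orbit Q a"
    using assms by (rule frob_orbit_subset)
  obtain s where b: "b = a ^ (Q ^ s)"
    using assms unfolding frob_orbit_def by blast
  \<comment> \<open>going once more around the cycle leads from b back to a\<close>
  have "s + (frob_period Q a * s - s) = frob_period Q a * s"
    using frob_period_pos by (simp add: mult_le_mono1[of 1, simplified])
  then have "b ^ (Q ^ (frob_period Q a * s - s)) = a"
    unfolding b using power_power_add[of a Q s] power_power_mult_period[OF power_frob_period]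
    by metis
  then have "a \<in> frob_orbit Q b"
    unfolding frob_orbit_def by (metis rangeI)
  then show "frob_orbit Q a \<subseteq> frob_orbit Q b"
    by (rule frob_orbit_subset)
qed

lemma orbit_poly_monic: "lead_coeff (orbit_poly Q a) = 1"
  unfolding orbit_poly_def lead_coeff_prod by simp

lemma degree_orbit_poly: "degree (orbit_poly Q a) = frob_period Q a"
  unfolding orbit_poly_def
  by (subst degree_prod_eq_sum_degree) (auto simp: card_frob_orbit)

lemma poly_orbit_poly_eq_0_iff: "poly (orbit_poly Q a) x = 0 \<longleftrightarrow> x \<in> frob_orbit Q a"
  unfolding orbit_poly_def poly_prod using finite_frob_orbit by auto

lemma orbit_poly_coeff_fixed: "coeff (orbit_poly Q a) i ^ Q = coeff (orbit_poly Q a) i"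
proof -
  let ?P = "orbit_poly Q a" and ?frob = "\<lambda>c::'a. c ^ Q" and ?l = "frob_period Q a"
  have Q_pos: "Q > 0"
    using Q_eq prime_CHAR prime_gt_0_nat by simp
  have "inj (\<lambda>x::'a. x ^ Q)"
    by (rule frobenius_inj[OF prime_CHAR Q_eq])
  then have card_image: "card (?frob ` frob_orbit Q a) = ?l"
    by (simp add: card_image card_frob_orbit inj_on_subset)
  \<comment> \<open>the conjugate of P vanishes on the Frobenius image of the orbit, which is the orbit again\<close>
  have "map_poly ?frob ?P = ?P"
  proof (rule poly_eqI_degree_lead_coeff[of _ ?l _ "?frob ` frob_orbit Q a"])
    show "coeff (map_poly ?frob ?P) ?l = coeff ?P ?l"
      using Q_pos orbit_poly_monic by (simp add: coeff_map_poly degree_orbit_poly)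
    show "degree (map_poly ?frob ?P) \<le> ?l" "degree ?P \<le> ?l"
      using Q_pos by (simp_all add: degree_map_poly degree_orbit_poly)
    fix z
    assume "z \<in> ?frob ` frob_orbit Q a"
    then obtain b where "b \<in> frob_orbit Q a" "z = b ^ Q"
      by blast
    moreover have "poly ?P b = 0" "poly ?P (b ^ Q) = 0"
      using \<open>b \<in> frob_orbit Q a\<close> frob_orbit_power_closed poly_orbit_poly_eq_0_iff by auto
    ultimately show "poly (map_poly ?frob ?P) z = poly ?P z"
      using poly_map_frobenius[OF prime_CHAR Q_eq, of ?P b] Q_pos by simp
  qed (simp add: card_image)
  then show ?thesis
    using Q_pos by (metis coeff_map_poly power_0_left neq0_conv)
qed

lemma poly_eq_0_on_frob_orbit:
  assumes "\<forall>i. coeff h i ^ Q = coeff h i" and "poly h a = 0" and "b \<in> frob_orbit Q a"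
  shows "poly h b = 0"
proof -
  obtain s where "b = a ^ (Q ^ s)"
    using assms(3) unfolding frob_orbit_def by blast
  moreover have "Q ^ s = CHAR('a) ^ (e * s)"
    using Q_eq by (simp add: power_mult)
  moreover have "\<forall>i. coeff h i ^ (Q ^ s) = coeff h i"
    using assms(1) power_power_fixed by blast
  ultimately show ?thesis
    using poly_frobenius[OF prime_CHAR, of "Q ^ s" "e * s" h a] assms(2) prime_CHAR prime_gt_0_nat
    by simp
qed

lemma frob_period_le_degree:
  assumes "h \<noteq> 0" and "\<forall>i. coeff h i ^ Q = coeff h i" and "poly h a = 0"
  shows "frob_period Q a \<le> degree h"
proof -
  have "frob_orbit Q a \<subseteq> {x. poly h x = 0}"
    using poly_eq_0_on_frob_orbit[OF assms(2,3)] by blast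
  then have "card (frob_orbit Q a) \<le> card {x. poly h x = 0}"
    by (intro card_mono poly_roots_finite assms(1))
  also have "\<dots> \<le> degree h"
    by (rule card_poly_roots_bound[OF assms(1)])
  finally show ?thesis
    by (simp add: card_frob_orbit)
qed

lemma minpoly_over_eq_orbit_poly: "minpoly_over (subfield_of_card Q) a = orbit_poly Q a"
  unfolding minpoly_over_def mem_subfield_of_card_iff
proof (rule the_equality)
  show "lead_coeff (orbit_poly Q a) = 1 \<and> (\<forall>i. coeff (orbit_poly Q a) i ^ Q = coeff (orbit_poly Q a) i)
    \<and> poly (orbit_poly Q a) a = 0 \<and> (\<forall>h. h \<noteq> 0 \<and> (\<forall>i. coeff h i ^ Q = coeff h i) \<and> poly h a = 0
      \<longrightarrow> degree (orbit_poly Q a) \<le> degree h)"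
    using orbit_poly_monic orbit_poly_coeff_fixed poly_orbit_poly_eq_0_iff in_frob_orbit_self
      frob_period_le_degree degree_orbit_poly by auto
next
  fix g
  assume g: "lead_coeff g = 1 \<and> (\<forall>i. coeff g i ^ Q = coeff g i) \<and> poly g a = 0 \<and>
    (\<forall>h. h \<noteq> 0 \<and> (\<forall>i. coeff h i ^ Q = coeff h i) \<and> poly h a = 0 \<longrightarrow> degree g \<le> degree h)"
  then have "g \<noteq> 0"
    by auto
  have "degree g \<le> frob_period Q a"
    using g orbit_poly_monic orbit_poly_coeff_fixed poly_orbit_poly_eq_0_iff in_frob_orbit_self
      degree_orbit_poly by (metis leading_coeff_0_iff zero_neq_one)
  moreover have "frob_period Q a \<le> degree g"
    using frob_period_le_degree[OF \<open>g \<noteq> 0\<close>] g by blast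
  ultimately show "g = orbit_poly Q a"
    using g poly_eq_0_on_frob_orbit orbit_poly_monic degree_orbit_poly poly_orbit_poly_eq_0_iff
    by (intro poly_eqI_degree_lead_coeff[of _ "frob_period Q a" _ "frob_orbit Q a"])
      (simp_all add: card_frob_orbit)
qed

end

section \<open>The absolute trace\<close>

context
  fixes p r :: nat
  assumes CHAR_eq: "CHAR('a::field) = p" and prime_p: "prime p"
begin

lemma power_p_power_add: "(x + y :: 'a) ^ (p ^ j) = x ^ (p ^ j) + y ^ (p ^ j)"
  using freshmans_dream'[of "p ^ j" j x y] CHAR_eq prime_p by simp

lemma abs_tr_add: "abs_tr p r k (x + y :: 'a) = abs_tr p r k x + abs_tr p r k y"
  unfolding abs_tr_def by (simp add: power_p_power_add sum.distrib)

lemma abs_tr_0: "abs_tr p r k (0 :: 'a) = 0"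
  unfolding abs_tr_def using prime_gt_0_nat[OF prime_p] by (simp add: power_0_left)

lemma abs_tr_scalar:
  assumes "(c::'a) ^ p = c"
  shows "abs_tr p r k (c * y) = c * abs_tr p r k y"
  unfolding abs_tr_def
  by (simp add: power_mult_distrib sum_distrib_left power_power_fixed[OF assms])

lemma abs_tr_power_p:
  assumes "(y::'a) \<in> subfield_of_card ((p ^ r) ^ k)"
  shows "abs_tr p r k (y ^ p) = abs_tr p r k y"
proof -
  have "abs_tr p r k (y ^ p) = (\<Sum>j<r * k. y ^ (p ^ Suc j))"
    unfolding abs_tr_def by (simp add: power_mult[symmetric] mult.commute)
  also have "\<dots> = (\<Sum>j<Suc (r * k). y ^ (p ^ j)) - y ^ (p ^ 0)"
    by (subst sum.lessThan_Suc_shift) simp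
  also have "\<dots> = abs_tr p r k y"
    using assms unfolding abs_tr_def by (simp add: power_mult)
  finally show ?thesis .
qed

lemma abs_tr_power_p_power:
  assumes "(y::'a) \<in> subfield_of_card ((p ^ r) ^ k)"
  shows "abs_tr p r k (y ^ (p ^ s)) = abs_tr p r k y"
proof (induction s)
  case (Suc s)
  have "(y ^ (p ^ s)) ^ ((p ^ r) ^ k) = (y ^ ((p ^ r) ^ k)) ^ (p ^ s)"
    by (simp flip: power_mult add: mult.commute)
  then have "y ^ (p ^ s) \<in> subfield_of_card ((p ^ r) ^ k)"
    using assms by simp
  moreover have "y ^ (p ^ Suc s) = (y ^ (p ^ s)) ^ p"
    by (simp add: power_mult[symmetric] mult.commute)
  ultimately show ?case
    using abs_tr_power_p Suc.IH by simp
qed simp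

lemma abs_tr_in_prime_field:
  assumes "(y::'a) \<in> subfield_of_card ((p ^ r) ^ k)"
  shows "abs_tr p r k y ^ p = abs_tr p r k y"
proof -
  have "abs_tr p r k y ^ p = (\<Sum>j<r * k. (y ^ (p ^ j)) ^ p)"
    unfolding abs_tr_def using CHAR_eq prime_p by (intro freshmans_dream_sum'[where n = 1]) simp_all
  also have "\<dots> = abs_tr p r k (y ^ p)"
    unfolding abs_tr_def by (simp flip: power_mult add: mult.commute)
  finally show ?thesis
    using abs_tr_power_p[OF assms] by simp
qed

lemma abs_tr_mult_degree:
  assumes "(y::'a) \<in> subfield_of_card ((p ^ r) ^ l)"
  shows "abs_tr p r (l * t) y = of_nat t * abs_tr p r l y"
proof -
  have periodic: "y ^ (p ^ (r * l)) = y"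
    using assms by (simp add: power_mult)
  \<comment> \<open>the exponents run through t full periods of length r * l\<close>
  have "abs_tr p r (l * t) y = (\<Sum>s<t. \<Sum>j\<in>{s * (r * l)..<s * (r * l) + r * l}. y ^ (p ^ j))"
    unfolding abs_tr_def sum.nat_group by (simp add: ac_simps)
  also have "\<dots> = (\<Sum>s<t. abs_tr p r l y)"
  proof (rule sum.cong[OF refl])
    fix s
    have "y ^ (p ^ (s * (r * l))) = y"
      using power_power_mult_period[OF periodic, of s] by (simp add: mult.commute)
    then have "y ^ (p ^ (j + s * (r * l))) = y ^ (p ^ j)" for j
      using power_power_add[of y p "s * (r * l)" j] by (simp add: add.commute)
    then show "(\<Sum>j\<in>{s * (r * l)..<s * (r * l) + r * l}. y ^ (p ^ j)) = abs_tr p r l y"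
      unfolding abs_tr_def
      using sum.shift_bounds_nat_ivl[of "\<lambda>j. y ^ (p ^ j)" 0 "s * (r * l)" "r * l"]
      by (simp add: atLeast0LessThan add.commute)
  qed
  also have "\<dots> = of_nat t * abs_tr p r l y"
    by simp
  finally show ?thesis .
qed

end

section \<open>Sums of characters and regrouping along classes\<close>

lemma sum_character_eq_0:
  fixes G :: "'b::ab_group_add set" and \<chi> :: "'b \<Rightarrow> complex"
  assumes "finite G"
    and add_closed: "\<And>g h. g \<in> G \<Longrightarrow> h \<in> G \<Longrightarrow> g + h \<in> G"
    and diff_closed: "\<And>g h. g \<in> G \<Longrightarrow> h \<in> G \<Longrightarrow> g - h \<in> G"
    and mult: "\<And>g h. g \<in> G \<Longrightarrow> h \<in> G \<Longrightarrow> \<chi> (g + h) = \<chi> g * \<chi> h"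
    and "g1 \<in> G" and "\<chi> g1 \<noteq> 1"
  shows "(\<Sum>g\<in>G. \<chi> g) = 0"
proof -
  have "(\<Sum>g\<in>G. \<chi> g) = (\<Sum>g\<in>G. \<chi> (g + g1))"
    using \<open>g1 \<in> G\<close> add_closed diff_closed
    by (intro sum.reindex_bij_witness[of _ "\<lambda>g. g + g1" "\<lambda>g. g - g1"]) auto
  also have "\<dots> = (\<Sum>g\<in>G. \<chi> g) * \<chi> g1"
    using \<open>g1 \<in> G\<close> mult by (simp add: sum_distrib_right)
  finally have "(\<Sum>g\<in>G. \<chi> g) * (1 - \<chi> g1) = 0"
    by (simp add: algebra_simps)
  then show ?thesis
    using \<open>\<chi> g1 \<noteq> 1\<close> by simp
qed

lemma sum_eq_0_if_class_sums_eq_0: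
  fixes w t :: "'i \<Rightarrow> 'a::comm_ring"
  assumes "finite I"
    and t_const: "\<And>i j. i \<in> I \<Longrightarrow> j \<in> I \<Longrightarrow> E i = E j \<Longrightarrow> t i = t j"
    and class_sums: "\<And>j. j \<in> I \<Longrightarrow> (\<Sum>i\<in>I. if E i = E j then w i else 0) = 0"
  shows "(\<Sum>i\<in>I. w i * t i) = 0"
proof -
  have "(\<Sum>i\<in>I. w i * t i) = (\<Sum>C\<in>E ` I. \<Sum>i | i \<in> I \<and> E i = C. w i * t i)"
    by (rule sum.image_gen[OF assms(1)])
  also have "\<dots> = 0"
  proof (rule sum.neutral, rule ballI)
    fix C
    assume "C \<in> E ` I"
    then obtain j where "j \<in> I" "C = E j"
      by blast
    have "t i = t j" if "i \<in> {i \<in> I. E i = E j}" for i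
      using that t_const \<open>j \<in> I\<close> by blast
    then have "(\<Sum>i | i \<in> I \<and> E i = C. w i * t i) = (\<Sum>i | i \<in> I \<and> E i = E j. w i * t j)"
      using \<open>C = E j\<close> by (intro sum.cong) simp_all
    also have "\<dots> = (\<Sum>i | i \<in> I \<and> E i = E j. w i) * t j"
      by (simp add: sum_distrib_right)
    also have "\<dots> = 0"
      using class_sums[OF \<open>j \<in> I\<close>] by (simp add: sum.inter_filter[OF assms(1)])
    finally show "(\<Sum>i | i \<in> I \<and> E i = C. w i * t i) = 0" .
  qed
  finally show ?thesis .
qed

section \<open>Divisibility of class sums for three indices\<close>

lemma class_sums_three_dvd_iff:
  fixes a :: "nat \<Rightarrow> int" and g :: "nat \<Rightarrow> 'b" and m :: int
  shows "(\<forall>j\<in>{1,2,3}. m dvd (\<Sum>i\<in>{1,2,3}. if g i = g j then a i else 0)) \<longleftrightarrow>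
    (g 1 = g 2 \<and> g 2 = g 3 \<and> m dvd a 1 + a 2 + a 3 \<and> \<not> m dvd a 1 \<and> \<not> m dvd a 2 \<and> \<not> m dvd a 3)
    \<or> (g 1 = g 2 \<and> m dvd a 1 + a 2 \<and> \<not> m dvd a 1 \<and> \<not> m dvd a 2 \<and> m dvd a 3)
    \<or> (g 1 = g 3 \<and> m dvd a 1 + a 3 \<and> \<not> m dvd a 1 \<and> \<not> m dvd a 3 \<and> m dvd a 2)
    \<or> (g 2 = g 3 \<and> m dvd a 2 + a 3 \<and> \<not> m dvd a 2 \<and> \<not> m dvd a 3 \<and> m dvd a 1)
    \<or> (m dvd a 1 \<and> m dvd a 2 \<and> m dvd a 3)"
proof -
  have pair: "m dvd x \<Longrightarrow> m dvd x + y \<longleftrightarrow> m dvd y" "m dvd y \<Longrightarrow> m dvd x + y \<longleftrightarrow> m dvd x" for x y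
    by (simp_all add: dvd_add_right_iff dvd_add_left_iff)
  have triple: "m dvd y \<Longrightarrow> m dvd x + (y + z) \<longleftrightarrow> m dvd x + z"
    "m dvd z \<Longrightarrow> m dvd x + (y + z) \<longleftrightarrow> m dvd x + y" for x y z
    using pair(1)[of y "x + z"] pair(1)[of z "x + y"] by (simp_all add: ac_simps)
  show ?thesis
    by (cases "g 1 = g 2"; cases "g 1 = g 3"; cases "g 2 = g 3";
        cases "m dvd a 1"; cases "m dvd a 2"; cases "m dvd a 3")
      (simp_all add: pair triple add.assoc)
qed

lemma ex_perm_123_iff:
  "(\<exists>j1 j2 j3. {j1, j2, j3} = {1, 2, 3::nat} \<and> T j1 j2 j3) \<longleftrightarrow>
    T 1 2 3 \<or> T 1 3 2 \<or> T 2 1 3 \<or> T 2 3 1 \<or> T 3 1 2 \<or> T 3 2 1"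
proof
  assume "\<exists>j1 j2 j3. {j1, j2, j3} = {1, 2, 3::nat} \<and> T j1 j2 j3"
  then obtain j1 j2 j3 where eq: "{j1, j2, j3} = {1, 2, 3::nat}" and "T j1 j2 j3"
    by blast
  have "j1 = 1 \<or> j1 = 2 \<or> j1 = 3" "j2 = 1 \<or> j2 = 2 \<or> j2 = 3" "j3 = 1 \<or> j3 = 2 \<or> j3 = 3"
    using eq by blast+
  moreover have "1 \<in> {j1, j2, j3}" "2 \<in> {j1, j2, j3}" "3 \<in> {j1, j2, j3}"
    using eq by blast+
  ultimately show "T 1 2 3 \<or> T 1 3 2 \<or> T 2 1 3 \<or> T 2 3 1 \<or> T 3 1 2 \<or> T 3 2 1"
    using \<open>T j1 j2 j3\<close> by (elim disjE) simp_all
next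
  assume "T 1 2 3 \<or> T 1 3 2 \<or> T 2 1 3 \<or> T 2 3 1 \<or> T 3 1 2 \<or> T 3 2 1"
  moreover have "{1, 3, 2} = {1, 2, 3::nat}" "{2, 1, 3} = {1, 2, 3::nat}" "{2, 3, 1} = {1, 2, 3::nat}"
    "{3, 1, 2} = {1, 2, 3::nat}" "{3, 2, 1} = {1, 2, 3::nat}"
    by auto
  ultimately show "\<exists>j1 j2 j3. {j1, j2, j3} = {1, 2, 3::nat} \<and> T j1 j2 j3"
    by blast
qed

lemma ex_perm_123_sym_iff:
  assumes "\<And>x y z. R x y z \<longleftrightarrow> R y x z"
  shows "(\<exists>j1 j2 j3. {j1, j2, j3} = {1, 2, 3::nat} \<and> R j1 j2 j3) \<longleftrightarrow> R 1 2 3 \<or> R 1 3 2 \<or> R 2 3 1"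
  unfolding ex_perm_123_iff using assms by blast

lemma div_common_divisor:
  fixes x y z :: int and a b e U :: nat
  assumes "U > 0" and "U dvd a" "U dvd b" "U dvd e"
  shows "(x * int a + y * int b) div int U = x * int (a div U) + y * int (b div U)"
    and "(x * int a + y * int b + z * int e) div int U = x * int (a div U) + y * int (b div U) + z * int (e div U)"
    and "(a * b) div (U * U) = (a div U) * (b div U)"
    and "(a * b * e) div (U * U * U) = (a div U) * (b div U) * (e div U)"
  using assms by (auto elim!: dvdE simp: algebra_simps)

locale three_indices =
  fixes p :: nat and g :: "nat \<Rightarrow> 'b" and c :: "nat \<Rightarrow> int" and k u :: "nat \<Rightarrow> nat"
  assumes prime_p: "prime p"
    and not_dvd_c: "\<And>i. i \<in> {1,2,3} \<Longrightarrow> \<not> int p dvd c i"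
    and u_dvd_k: "\<And>i. i \<in> {1,2,3} \<Longrightarrow> u i dvd k i"
    and u_pos: "\<And>i. i \<in> {1,2,3} \<Longrightarrow> u i > 0"
    and u_cong: "\<And>i j. i \<in> {1,2,3} \<Longrightarrow> j \<in> {1,2,3} \<Longrightarrow> g i = g j \<Longrightarrow> u i = u j"
begin

definition weight :: "nat \<Rightarrow> int" where
  "weight i = c i * int (k i div u i)"

lemma dvd_weight_iff: "i \<in> {1,2,3} \<Longrightarrow> int p dvd weight i \<longleftrightarrow> p dvd k i div u i"
  using not_dvd_c prime_p unfolding weight_def by (auto simp: prime_dvd_mult_iff)

lemma first_case_iff:
  "(g 1 = g 2 \<and> g 2 = g 3 \<and>
     int p dvd ((c 1 * int (k 1) + c 2 * int (k 2) + c 3 * int (k 3)) div int (u 1)) \<and>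
     \<not> p dvd ((k 1 * k 2 * k 3) div (u 1 * u 2 * u 3))) \<longleftrightarrow>
   (g 1 = g 2 \<and> g 2 = g 3 \<and> int p dvd weight 1 + weight 2 + weight 3 \<and>
     \<not> int p dvd weight 1 \<and> \<not> int p dvd weight 2 \<and> \<not> int p dvd weight 3)"
proof (cases "g 1 = g 2 \<and> g 2 = g 3")
  case True
  then have "u 2 = u 1" "u 3 = u 1"
    using u_cong[of 2 1] u_cong[of 3 1] by auto
  then have "u 1 > 0" "u 1 dvd k 1" "u 1 dvd k 2" "u 1 dvd k 3"
    using u_pos[of 1] u_dvd_k[of 1] u_dvd_k[of 2] u_dvd_k[of 3] by simp_all
  then have "(c 1 * int (k 1) + c 2 * int (k 2) + c 3 * int (k 3)) div int (u 1)
      = weight 1 + weight 2 + weight 3"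
    and "(k 1 * k 2 * k 3) div (u 1 * u 2 * u 3) = (k 1 div u 1) * (k 2 div u 2) * (k 3 div u 3)"
    using div_common_divisor(2,4) \<open>u 2 = u 1\<close> \<open>u 3 = u 1\<close> unfolding weight_def by (simp_all only:)
  then show ?thesis
    using True dvd_weight_iff[of 1] dvd_weight_iff[of 2] dvd_weight_iff[of 3] prime_p
    by (simp add: prime_dvd_mult_iff)
qed auto

lemma second_case_iff:
  "(\<exists>j1 j2 j3. {j1, j2, j3} = {1, 2, 3::nat} \<and> g j1 = g j2 \<and>
     int p dvd ((c j1 * int (k j1) + c j2 * int (k j2)) div int (u j1)) \<and>
     \<not> p dvd ((k j1 * k j2) div (u j1 * u j2)) \<and> p dvd (k j3 div u j3)) \<longleftrightarrow>
   (\<exists>j1 j2 j3. {j1, j2, j3} = {1, 2, 3::nat} \<and> g j1 = g j2 \<and> int p dvd weight j1 + weight j2 \<and>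
     \<not> int p dvd weight j1 \<and> \<not> int p dvd weight j2 \<and> int p dvd weight j3)"
proof -
  have "g j1 = g j2 \<and> int p dvd ((c j1 * int (k j1) + c j2 * int (k j2)) div int (u j1)) \<and>
     \<not> p dvd ((k j1 * k j2) div (u j1 * u j2)) \<and> p dvd (k j3 div u j3) \<longleftrightarrow>
    g j1 = g j2 \<and> int p dvd weight j1 + weight j2 \<and>
     \<not> int p dvd weight j1 \<and> \<not> int p dvd weight j2 \<and> int p dvd weight j3"
    if "{j1, j2, j3} = {1, 2, 3::nat}" for j1 j2 j3
  proof (cases "g j1 = g j2")
    case True
    have "j1 \<in> {1,2,3}" "j2 \<in> {1,2,3}" "j3 \<in> {1,2,3}"
      using that by blast+
    have "u j2 = u j1"
      using u_cong \<open>j1 \<in> {1,2,3}\<close> \<open>j2 \<in> {1,2,3}\<close> True by metis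
    then have "u j1 > 0" "u j1 dvd k j1" "u j1 dvd k j2"
      using u_pos u_dvd_k \<open>j1 \<in> {1,2,3}\<close> \<open>j2 \<in> {1,2,3}\<close> by metis+
    then have "(c j1 * int (k j1) + c j2 * int (k j2)) div int (u j1) = weight j1 + weight j2"
      and "(k j1 * k j2) div (u j1 * u j2) = (k j1 div u j1) * (k j2 div u j2)"
      using div_common_divisor(1,3)[of _ _ "k j2"] \<open>u j2 = u j1\<close> unfolding weight_def by (simp_all only:)
    then show ?thesis
      using True dvd_weight_iff \<open>j1 \<in> {1,2,3}\<close> \<open>j2 \<in> {1,2,3}\<close> \<open>j3 \<in> {1,2,3}\<close> prime_p
      by (simp add: prime_dvd_mult_iff)
  qed simp
  then show ?thesis
    by (simp only: cong: conj_cong)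
qed

lemma third_case_iff:
  "(\<forall>i\<in>{1,2,3}. p dvd (k i div u i)) \<longleftrightarrow> int p dvd weight 1 \<and> int p dvd weight 2 \<and> int p dvd weight 3"
  using dvd_weight_iff by auto

theorem class_sums_dvd_iff:
  "(\<forall>j\<in>{1,2,3}. int p dvd (\<Sum>i\<in>{1,2,3}. if g i = g j then c i * int (k i div u i) else 0)) \<longleftrightarrow>
    (g 1 = g 2 \<and> g 2 = g 3 \<and>
       int p dvd ((c 1 * int (k 1) + c 2 * int (k 2) + c 3 * int (k 3)) div int (u 1)) \<and>
       \<not> p dvd ((k 1 * k 2 * k 3) div (u 1 * u 2 * u 3)))
    \<or> (\<exists>j1 j2 j3. {j1, j2, j3} = {1, 2, 3::nat} \<and> g j1 = g j2 \<and>
       int p dvd ((c j1 * int (k j1) + c j2 * int (k j2)) div int (u j1)) \<and>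
       \<not> p dvd ((k j1 * k j2) div (u j1 * u j2)) \<and> p dvd (k j3 div u j3))
    \<or> (\<forall>i\<in>{1,2,3}. p dvd (k i div u i))"
proof -
  have "(\<exists>j1 j2 j3. {j1, j2, j3} = {1, 2, 3::nat} \<and> g j1 = g j2 \<and> int p dvd weight j1 + weight j2 \<and>
     \<not> int p dvd weight j1 \<and> \<not> int p dvd weight j2 \<and> int p dvd weight j3) \<longleftrightarrow>
    (g 1 = g 2 \<and> int p dvd weight 1 + weight 2 \<and> \<not> int p dvd weight 1 \<and> \<not> int p dvd weight 2 \<and> int p dvd weight 3)
    \<or> (g 1 = g 3 \<and> int p dvd weight 1 + weight 3 \<and> \<not> int p dvd weight 1 \<and> \<not> int p dvd weight 3 \<and> int p dvd weight 2)
    \<or> (g 2 = g 3 \<and> int p dvd weight 2 + weight 3 \<and> \<not> int p dvd weight 2 \<and> \<not> int p dvd weight 3 \<and> int p dvd weight 1)"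
    by (rule ex_perm_123_sym_iff) (auto simp: add.commute)
  then show ?thesis
    unfolding first_case_iff second_case_iff third_case_iff weight_def[symmetric]
      class_sums_three_dvd_iff[where m = "int p" and a = weight and g = g]
    by (simp only: disj_assoc)
qed

end

section \<open>The trace functional on polynomials over the base field\<close>

definition trace_form ::
    "nat \<Rightarrow> nat \<Rightarrow> 'i set \<Rightarrow> ('i \<Rightarrow> int) \<Rightarrow> ('i \<Rightarrow> nat) \<Rightarrow> ('i \<Rightarrow> 'a::field) \<Rightarrow> 'a poly \<Rightarrow> 'a" where
  "trace_form p r I c k \<alpha> f = (\<Sum>i\<in>I. of_int (c i) * abs_tr p r (k i) (poly f (\<alpha> i)))"

definition Fd'_lower :: "nat \<Rightarrow> nat \<Rightarrow> nat \<Rightarrow> 'a::field poly set" where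
  "Fd'_lower p q d = {g. degree g < d \<and> (\<forall>i. coeff g i \<in> subfield_of_card q) \<and>
      (\<forall>k. 1 \<le> k \<and> k \<le> d div p \<longrightarrow> coeff g (p * k) = 0)}"

locale trace_form_setting =
  fixes p q r n d :: nat and I :: "'i set" and k :: "'i \<Rightarrow> nat"
    and \<alpha> :: "'i \<Rightarrow> 'a::{finite,field}" and c :: "'i \<Rightarrow> int"
  assumes prime_p: "prime p" and r_pos: "r > 0" and q_eq: "q = p ^ r"
    and card_UNIV: "card (UNIV :: 'a set) = q ^ n"
    and finite_I: "finite I"
    and k_pos: "\<And>i. i \<in> I \<Longrightarrow> k i > 0"
    and k_dvd_n: "\<And>i. i \<in> I \<Longrightarrow> k i dvd n"
    and \<alpha>_mem: "\<And>i. i \<in> I \<Longrightarrow> \<alpha> i \<in> subfield_of_card (q ^ k i)"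
    and sum_k_less: "(\<Sum>i\<in>I. k i) < d"
begin

abbreviation \<Phi> :: "'a poly \<Rightarrow> 'a" where
  "\<Phi> \<equiv> trace_form p r I c k \<alpha>"

abbreviation period :: "'i \<Rightarrow> nat" where
  "period i \<equiv> frob_period q (\<alpha> i)"

abbreviation orbit :: "'i \<Rightarrow> 'a set" where
  "orbit i \<equiv> frob_orbit q (\<alpha> i)"

definition class_weight :: "'i \<Rightarrow> int" where
  "class_weight j = (\<Sum>i\<in>I. if orbit i = orbit j then c i * int (k i div period i) else 0)"

lemma CHAR_eq: "CHAR('a) = p"
  using CHAR_eq_prime_of_card[OF prime_p, of "r * n"] card_UNIV q_eq by (simp add: power_mult)

lemma prime_CHAR: "prime CHAR('a)"
  using CHAR_eq prime_p by simp

lemma q_eq_CHAR: "q = CHAR('a) ^ r"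
  using CHAR_eq q_eq by simp

lemma q_power_eq: "q ^ s = CHAR('a) ^ (r * s)"
  using q_eq_CHAR by (simp add: power_mult)

lemma d_pos: "d > 0"
  using sum_k_less by simp

lemma q_pos: "q > 0"
  using prime_gt_0_nat[OF prime_p] q_eq by simp

lemma \<alpha>_periodic: "i \<in> I \<Longrightarrow> \<alpha> i ^ (q ^ k i) = \<alpha> i"
  using \<alpha>_mem by simp

lemma period_pos: "i \<in> I \<Longrightarrow> period i > 0"
  using frob_period_pos[OF prime_CHAR q_eq_CHAR \<alpha>_periodic k_pos] .

lemma period_dvd_k: "i \<in> I \<Longrightarrow> period i dvd k i"
  using frob_period_dvd[OF prime_CHAR q_eq_CHAR \<alpha>_periodic k_pos \<alpha>_periodic] .

lemma card_orbit: "i \<in> I \<Longrightarrow> card (orbit i) = period i"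
  using card_frob_orbit[OF prime_CHAR q_eq_CHAR \<alpha>_periodic k_pos] .

lemma finite_orbit: "i \<in> I \<Longrightarrow> finite (orbit i)"
  using finite_frob_orbit[OF prime_CHAR q_eq_CHAR \<alpha>_periodic k_pos] .

lemma orbit_eq_if_mem: "i \<in> I \<Longrightarrow> b \<in> orbit i \<Longrightarrow> frob_orbit q b = orbit i"
  using frob_orbit_eq_if_mem[OF prime_CHAR q_eq_CHAR \<alpha>_periodic k_pos] .

lemma orbit_eq_if_meet:
  assumes "i \<in> I" "j \<in> I" "b \<in> orbit i" "b \<in> orbit j"
  shows "orbit i = orbit j"
  using orbit_eq_if_mem[OF assms(1,3)] orbit_eq_if_mem[OF assms(2,4)] by simp

lemma power_q_add: "(x + y :: 'a) ^ q = x ^ q + y ^ q"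
  by (rule freshmans_dream'[OF prime_CHAR q_eq_CHAR])

lemma power_q_diff: "(x - y :: 'a) ^ q = x ^ q - y ^ q"
  by (rule frobenius_diff[OF prime_CHAR q_eq_CHAR])

lemma poly_frobenius_q:
  fixes f :: "'a poly"
  assumes "\<forall>i. coeff f i \<in> subfield_of_card q"
  shows "poly f (x ^ (q ^ s)) = poly f x ^ (q ^ s)"
  by (rule poly_frobenius[OF prime_CHAR q_power_eq]) (use assms power_power_fixed in auto)

lemma poly_mem_subfield:
  fixes f :: "'a poly"
  assumes "\<forall>i. coeff f i \<in> subfield_of_card q" and "x \<in> subfield_of_card (q ^ l)"
  shows "poly f x \<in> subfield_of_card ((p ^ r) ^ l)"
  using poly_frobenius_q[OF assms(1), of x l] assms(2) q_eq by simp

lemma minpoly_eq_orbit_poly: "i \<in> I \<Longrightarrow> minpoly_over (subfield_of_card q) (\<alpha> i) = orbit_poly q (\<alpha> i)"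
  using minpoly_over_eq_orbit_poly[OF prime_CHAR q_eq_CHAR \<alpha>_periodic k_pos] .

lemma degree_minpoly: "i \<in> I \<Longrightarrow> degree (minpoly_over (subfield_of_card q) (\<alpha> i)) = period i"
  using minpoly_eq_orbit_poly degree_orbit_poly[OF prime_CHAR q_eq_CHAR \<alpha>_periodic k_pos] by simp

lemma minpoly_eq_iff_orbit_eq:
  assumes "i \<in> I" and "j \<in> I"
  shows "minpoly_over (subfield_of_card q) (\<alpha> i) = minpoly_over (subfield_of_card q) (\<alpha> j)
    \<longleftrightarrow> orbit i = orbit j"
proof
  assume "minpoly_over (subfield_of_card q) (\<alpha> i) = minpoly_over (subfield_of_card q) (\<alpha> j)"
  then have "poly (orbit_poly q (\<alpha> i)) x = 0 \<longleftrightarrow> poly (orbit_poly q (\<alpha> j)) x = 0" for x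
    using minpoly_eq_orbit_poly assms by simp
  then show "orbit i = orbit j"
    using poly_orbit_poly_eq_0_iff[OF prime_CHAR q_eq_CHAR \<alpha>_periodic k_pos] assms by blast
qed (simp add: minpoly_eq_orbit_poly assms orbit_poly_def)

lemma trace_form_add: "\<Phi> (f + g) = \<Phi> f + \<Phi> g"
  unfolding trace_form_def by (simp add: abs_tr_add[OF CHAR_eq prime_p] sum.distrib algebra_simps)

lemma trace_form_0: "\<Phi> 0 = 0"
  unfolding trace_form_def by (simp add: abs_tr_0[OF CHAR_eq prime_p])

lemma trace_form_sum: "\<Phi> (\<Sum>x\<in>A. f x) = (\<Sum>x\<in>A. \<Phi> (f x))"
  by (induction A rule: infinite_finite_induct) (simp_all add: trace_form_0 trace_form_add)

lemma trace_form_smult: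
  assumes "w ^ p = w"
  shows "\<Phi> (smult w f) = w * \<Phi> f"
  unfolding trace_form_def
  by (simp add: abs_tr_scalar[OF CHAR_eq prime_p assms] sum_distrib_left algebra_simps)

lemma trace_form_in_prime_field:
  assumes "\<forall>i. coeff f i \<in> subfield_of_card q"
  shows "\<Phi> f ^ p = \<Phi> f"
proof -
  have "\<Phi> f ^ p = (\<Sum>i\<in>I. (of_int (c i) * abs_tr p r (k i) (poly f (\<alpha> i))) ^ p)"
    unfolding trace_form_def using CHAR_eq prime_p by (intro freshmans_dream_sum'[where n = 1]) simp_all
  also have "\<dots> = \<Phi> f"
    unfolding trace_form_def power_mult_distrib
    using of_int_power_CHAR[OF prime_CHAR] CHAR_eq
      abs_tr_in_prime_field[OF CHAR_eq prime_p poly_mem_subfield[OF assms \<alpha>_mem]]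
    by (intro sum.cong) simp_all
  finally show ?thesis .
qed

lemma trace_form_eq_period_traces:
  assumes "\<forall>i. coeff f i \<in> subfield_of_card q"
  shows "\<Phi> f = (\<Sum>i\<in>I. of_int (c i * int (k i div period i)) * abs_tr p r (period i) (poly f (\<alpha> i)))"
  unfolding trace_form_def
proof (rule sum.cong[OF refl])
  fix i
  assume "i \<in> I"
  have "k i = period i * (k i div period i)"
    using period_dvd_k[OF \<open>i \<in> I\<close>] by simp
  moreover have "poly f (\<alpha> i) \<in> subfield_of_card ((p ^ r) ^ period i)"
    using poly_mem_subfield[OF assms] power_frob_period[OF prime_CHAR q_eq_CHAR \<alpha>_periodic k_pos]
      \<open>i \<in> I\<close> by simp
  ultimately show "of_int (c i) * abs_tr p r (k i) (poly f (\<alpha> i))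
      = of_int (c i * int (k i div period i)) * abs_tr p r (period i) (poly f (\<alpha> i))"
    using abs_tr_mult_degree[OF CHAR_eq prime_p] by (metis mult.assoc of_int_mult of_int_of_nat_eq)
qed

lemma abs_tr_eq_if_orbit_eq:
  assumes "\<forall>i. coeff f i \<in> subfield_of_card q" and "i \<in> I" "j \<in> I" "orbit i = orbit j"
  shows "abs_tr p r (period i) (poly f (\<alpha> i)) = abs_tr p r (period j) (poly f (\<alpha> j))"
proof -
  have "period i = period j"
    using card_orbit assms(2-4) by metis
  obtain s where "\<alpha> j = \<alpha> i ^ (q ^ s)"
    using in_frob_orbit_self[of "\<alpha> j" q] assms(4) unfolding frob_orbit_def by auto
  then have "poly f (\<alpha> j) = poly f (\<alpha> i) ^ (p ^ (r * s))"
    using poly_frobenius_q[OF assms(1)] q_eq by (simp add: power_mult)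
  moreover have "poly f (\<alpha> i) \<in> subfield_of_card ((p ^ r) ^ period i)"
    using poly_mem_subfield[OF assms(1)] power_frob_period[OF prime_CHAR q_eq_CHAR \<alpha>_periodic k_pos]
      assms(2) by simp
  ultimately show ?thesis
    using abs_tr_power_p_power[OF CHAR_eq prime_p] \<open>period i = period j\<close> by simp
qed

lemma trace_form_eq_0_if_class_weights_eq_0:
  assumes "\<forall>j\<in>I. (of_int (class_weight j) :: 'a) = 0" and "\<forall>i. coeff f i \<in> subfield_of_card q"
  shows "\<Phi> f = 0"
  unfolding trace_form_eq_period_traces[OF assms(2)]
proof (rule sum_eq_0_if_class_sums_eq_0[OF finite_I])
  show "abs_tr p r (period i) (poly f (\<alpha> i)) = abs_tr p r (period j) (poly f (\<alpha> j))"
    if "i \<in> I" "j \<in> I" "orbit i = orbit j" for i j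
    using abs_tr_eq_if_orbit_eq[OF assms(2) that] .
  show "(\<Sum>i\<in>I. if orbit i = orbit j then of_int (c i * int (k i div period i)) else 0) = (0 :: 'a)"
    if "j \<in> I" for j
  proof -
    have "(of_int (class_weight j) :: 'a)
        = (\<Sum>i\<in>I. if orbit i = orbit j then of_int (c i * int (k i div period i)) else 0)"
      unfolding class_weight_def of_int_sum by (intro sum.cong) simp_all
    then show ?thesis
      using assms(1) that by simp
  qed
qed

lemma orbit_interpolation_exists:
  fixes \<phi> :: "'a \<Rightarrow> 'a"
  assumes equivariant: "\<And>b. b \<in> (\<Union>i\<in>I. orbit i) \<Longrightarrow> \<phi> (b ^ q) = \<phi> b ^ q"
    and "I \<noteq> {}"
  shows "\<exists>L. (\<forall>i. coeff L i \<in> subfield_of_card q) \<and> (\<forall>b\<in>(\<Union>i\<in>I. orbit i). poly L b = \<phi> b)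
    \<and> degree L < d"
proof -
  let ?B = "\<Union>i\<in>I. orbit i"
  have finite: "finite ?B"
    using finite_I finite_orbit by blast
  have nonempty: "?B \<noteq> {}"
    using \<open>I \<noteq> {}\<close> in_frob_orbit_self by blast
  have closed: "\<And>b. b \<in> ?B \<Longrightarrow> b ^ q \<in> ?B"
    using frob_orbit_power_closed by blast
  obtain L where L: "\<forall>i. coeff L i ^ q = coeff L i" "\<forall>b\<in>?B. poly L b = \<phi> b"
      "degree L < card ?B"
    using frobenius_interpolating_poly_exists[where \<phi> = \<phi>, OF prime_CHAR q_eq_CHAR finite nonempty closed equivariant]
    by blast
  have "card ?B \<le> (\<Sum>i\<in>I. card (orbit i))"
    by (rule card_UN_le[OF finite_I])
  also have "\<dots> \<le> (\<Sum>i\<in>I. k i)"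
    using card_orbit period_dvd_k k_pos by (intro sum_mono) (simp add: dvd_imp_le)
  finally have "degree L < d"
    using L(3) sum_k_less by linarith
  then show ?thesis
    using L by auto
qed

text \<open>The Frobenius-compatible function on the orbits that takes the value \<open>y\<close> at \<open>\<alpha> j\<close> and
  vanishes off the orbit of \<open>\<alpha> j\<close>; the chosen exponent is immaterial as long as \<open>y\<close> lies
  in \<open>F_(q^period j)\<close>.\<close>

definition orbit_lift :: "'i \<Rightarrow> 'a \<Rightarrow> 'a \<Rightarrow> 'a" where
  "orbit_lift j y b = (if b \<in> orbit j then y ^ (q ^ (SOME s. b = \<alpha> j ^ (q ^ s))) else 0)"

lemma orbit_lift_conj:
  assumes "j \<in> I" and y: "y \<in> subfield_of_card (q ^ period j)"
  shows "orbit_lift j y (\<alpha> j ^ (q ^ s)) = y ^ (q ^ s)"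
proof -
  let ?s = "SOME s'. \<alpha> j ^ (q ^ s) = \<alpha> j ^ (q ^ s')"
  have "\<alpha> j ^ (q ^ s) = \<alpha> j ^ (q ^ ?s)"
    by (rule someI[of _ s]) simp
  then have "?s mod period j = s mod period j"
    using frob_period_mod_eq[OF prime_CHAR q_eq_CHAR \<alpha>_periodic k_pos, OF \<open>j \<in> I\<close> \<open>j \<in> I\<close>]
    by metis
  then have "y ^ (q ^ ?s) = y ^ (q ^ s)"
    using power_power_mod[of y q "period j"] y by (metis mem_subfield_of_card_iff)
  moreover have "\<alpha> j ^ (q ^ s) \<in> orbit j"
    unfolding frob_orbit_def by blast
  ultimately show ?thesis
    unfolding orbit_lift_def by simp
qed

lemma orbit_lift_equivariant:
  assumes "j \<in> I" and y: "y \<in> subfield_of_card (q ^ period j)" and "b \<in> (\<Union>i\<in>I. orbit i)"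
  shows "orbit_lift j y (b ^ q) = orbit_lift j y b ^ q"
proof (cases "b \<in> orbit j")
  case True
  then obtain s where b: "b = \<alpha> j ^ (q ^ s)"
    unfolding frob_orbit_def by blast
  then have "b ^ q = \<alpha> j ^ (q ^ Suc s)"
    by (simp add: power_mult[symmetric] mult.commute)
  then have "orbit_lift j y (b ^ q) = y ^ (q ^ Suc s)"
    using orbit_lift_conj[OF assms(1,2), of "Suc s"] by simp
  also have "\<dots> = (y ^ (q ^ s)) ^ q"
    by (simp add: power_mult[symmetric] mult.commute)
  finally show ?thesis
    using orbit_lift_conj[OF assms(1,2)] b by simp
next
  case False
  obtain i where "i \<in> I" "b \<in> orbit i"
    using assms(3) by blast
  then have "b ^ q \<notin> orbit j"
    using False orbit_eq_if_meet[OF _ \<open>j \<in> I\<close>] frob_orbit_power_closed by blast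
  then show ?thesis
    using False q_pos unfolding orbit_lift_def by simp
qed

lemma orbit_indicator_poly_exists:
  assumes "j \<in> I" and y: "y \<in> subfield_of_card (q ^ period j)"
  obtains L where "\<forall>i. coeff L i \<in> subfield_of_card q"
    and "\<And>s. poly L (\<alpha> j ^ (q ^ s)) = y ^ (q ^ s)"
    and "\<And>i. i \<in> I \<Longrightarrow> orbit i \<noteq> orbit j \<Longrightarrow> poly L (\<alpha> i) = 0"
proof -
  have "I \<noteq> {}"
    using \<open>j \<in> I\<close> by blast
  then obtain L where L: "\<forall>i. coeff L i \<in> subfield_of_card q"
    "\<forall>b\<in>(\<Union>i\<in>I. orbit i). poly L b = orbit_lift j y b"
    using orbit_interpolation_exists[where \<phi> = "orbit_lift j y", OF orbit_lift_equivariant[OF assms]]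
    by blast
  show ?thesis
  proof (rule that[OF L(1)])
    show "poly L (\<alpha> j ^ (q ^ s)) = y ^ (q ^ s)" for s
    proof -
      have "\<alpha> j ^ (q ^ s) \<in> (\<Union>i\<in>I. orbit i)"
        using \<open>j \<in> I\<close> unfolding frob_orbit_def by blast
      then show ?thesis
        using L(2) orbit_lift_conj[OF assms, of s] by (simp only:)
    qed
    show "poly L (\<alpha> i) = 0" if "i \<in> I" "orbit i \<noteq> orbit j" for i
    proof -
      have "\<alpha> i \<in> (\<Union>i\<in>I. orbit i)"
        using that(1) in_frob_orbit_self by blast
      then have "poly L (\<alpha> i) = orbit_lift j y (\<alpha> i)"
        using L(2) by blast
      moreover have "\<alpha> i \<notin> orbit j"
        using orbit_eq_if_meet[OF that(1) \<open>j \<in> I\<close> in_frob_orbit_self] that(2) by blast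
      ultimately show ?thesis
        unfolding orbit_lift_def by simp
    qed
  qed
qed

lemma class_weight_eq_0_if_trace_form_eq_0:
  assumes vanish: "\<And>f. \<forall>i. coeff f i \<in> subfield_of_card q \<Longrightarrow> \<Phi> f = 0" and "j \<in> I"
  shows "(of_int (class_weight j) :: 'a) = 0"
proof -
  obtain y :: 'a where y: "y \<in> subfield_of_card ((p ^ r) ^ period j)" "abs_tr p r (period j) y \<noteq> 0"
    using abs_tr_nonzero_exists[OF prime_p CHAR_eq r_pos period_pos[OF \<open>j \<in> I\<close>]] card_UNIV q_eq
      dvd_trans[OF period_dvd_k k_dvd_n] \<open>j \<in> I\<close> by blast
  obtain L where L: "\<forall>i. coeff L i \<in> subfield_of_card q" "\<And>s. poly L (\<alpha> j ^ (q ^ s)) = y ^ (q ^ s)"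
      "\<And>i. i \<in> I \<Longrightarrow> orbit i \<noteq> orbit j \<Longrightarrow> poly L (\<alpha> i) = 0"
    using orbit_indicator_poly_exists[OF \<open>j \<in> I\<close>] y(1) q_eq by blast
  have trace_at: "abs_tr p r (period i) (poly L (\<alpha> i))
      = (if orbit i = orbit j then abs_tr p r (period j) y else 0)" if "i \<in> I" for i
  proof (cases "orbit i = orbit j")
    case True
    then obtain s where "\<alpha> i = \<alpha> j ^ (q ^ s)"
      using in_frob_orbit_self[of "\<alpha> i" q] unfolding frob_orbit_def by auto
    then have "poly L (\<alpha> i) = y ^ (p ^ (r * s))"
      using L(2) q_eq by (simp add: power_mult)
    moreover have "period i = period j"
      using card_orbit True that \<open>j \<in> I\<close> by metis
    ultimately show ?thesis
      using True abs_tr_power_p_power[OF CHAR_eq prime_p y(1)] by simp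
  next
    case False
    then show ?thesis
      using L(3)[OF that] abs_tr_0[OF CHAR_eq prime_p] by simp
  qed
  have "0 = \<Phi> L"
    using vanish L(1) by simp
  also have "\<dots> = (\<Sum>i\<in>I. of_int (c i * int (k i div period i))
      * (if orbit i = orbit j then abs_tr p r (period j) y else 0))"
    unfolding trace_form_eq_period_traces[OF L(1)] by (intro sum.cong) (simp_all add: trace_at)
  also have "\<dots> = of_int (class_weight j) * abs_tr p r (period j) y"
    unfolding class_weight_def of_int_sum sum_distrib_right by (intro sum.cong) simp_all
  finally show ?thesis
    using y(2) by simp
qed

lemma p_th_root_exists:
  fixes a :: 'a
  assumes "a \<in> subfield_of_card q"
  obtains b where "b \<in> subfield_of_card q" and "b ^ p = a"
proof -
  let ?F = "subfield_of_card q :: 'a set"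
  have "inj (\<lambda>x::'a. x ^ p)"
    using frobenius_inj[OF prime_CHAR, of p 1] CHAR_eq by simp
  then have "inj_on (\<lambda>x::'a. x ^ p) ?F"
    using inj_on_subset by blast
  moreover have "(x ^ p) ^ q = (x ^ q) ^ p" for x :: 'a
    by (simp flip: power_mult add: mult.commute)
  then have "(\<lambda>x. x ^ p) ` ?F \<subseteq> ?F"
    by auto
  ultimately have "(\<lambda>x. x ^ p) ` ?F = ?F"
    by (intro endo_inj_surj) simp_all
  then obtain b where "b \<in> ?F" "a = b ^ p"
    using assms by (metis imageE)
  then show ?thesis
    using that by simp
qed

lemma trace_form_monom_power_p:
  assumes "b \<in> subfield_of_card q"
  shows "\<Phi> (monom (b ^ p) (p * j)) = \<Phi> (monom b j)"
proof -
  have b_poly: "\<forall>i. coeff (monom b j) i \<in> subfield_of_card q"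
    using assms q_pos by (auto simp: coeff_monom power_0_left)
  have "poly (monom (b ^ p) (p * j)) x = poly (monom b j) x ^ p" for x
    by (simp add: poly_monom power_mult_distrib power_mult[symmetric] mult.commute)
  then have "abs_tr p r (k i) (poly (monom (b ^ p) (p * j)) (\<alpha> i))
      = abs_tr p r (k i) (poly (monom b j) (\<alpha> i))" if "i \<in> I" for i
    using abs_tr_power_p[OF CHAR_eq prime_p poly_mem_subfield[OF b_poly \<alpha>_mem[OF that]]] by simp
  then show ?thesis
    unfolding trace_form_def by (intro sum.cong) simp_all
qed

lemma trace_form_monom_eq_0:
  assumes vanish: "\<forall>g\<in>Fd'_lower p q d. \<Phi> g = 0"
  shows "j < d \<Longrightarrow> a \<in> subfield_of_card q \<Longrightarrow> \<Phi> (monom a j) = 0"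
proof (induction j arbitrary: a rule: less_induct)
  case (less j)
  show ?case
  proof (cases "j > 0 \<and> p dvd j")
    case False
    have "monom a j \<in> Fd'_lower p q d"
      unfolding Fd'_lower_def
    proof (intro CollectI conjI allI impI)
      show "degree (monom a j) < d"
        using less.prems(1) degree_monom_le order.strict_trans1 by blast
      show "coeff (monom a j) i \<in> subfield_of_card q" for i
        using less.prems(2) q_pos by (auto simp: coeff_monom power_0_left)
      show "coeff (monom a j) (p * l) = 0" if "1 \<le> l \<and> l \<le> d div p" for l
        using False that prime_gt_0_nat[OF prime_p] by (auto simp: coeff_monom)
    qed
    then show ?thesis
      using vanish by blast
  next
    case True
    then obtain j' where j: "j = p * j'"
      by blast
    then have "j' < j"
      using True prime_gt_1_nat[OF prime_p] by simp
    obtain b where "b \<in> subfield_of_card q" "b ^ p = a"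
      using p_th_root_exists[OF less.prems(2)] .
    then show ?thesis
      using trace_form_monom_power_p less.IH[OF \<open>j' < j\<close>] \<open>j' < j\<close> less.prems(1) j by auto
  qed
qed

lemma trace_form_eq_0_if_degree_less:
  assumes "\<forall>g\<in>Fd'_lower p q d. \<Phi> g = 0"
    and "\<forall>i. coeff f i \<in> subfield_of_card q" and "degree f < d"
  shows "\<Phi> f = 0"
proof -
  have "\<Phi> f = (\<Sum>i\<le>degree f. \<Phi> (monom (coeff f i) i))"
    by (subst poly_as_sum_of_monoms[symmetric, of f]) (rule trace_form_sum)
  also have "\<dots> = 0"
    using trace_form_monom_eq_0[OF assms(1)] assms(2,3) by (intro sum.neutral) auto
  finally show ?thesis .
qed

lemma trace_form_eq_0_if_eq_0_on_lower:
  assumes vanish: "\<forall>g\<in>Fd'_lower p q d. \<Phi> g = 0"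
    and f: "\<forall>i. coeff f i \<in> subfield_of_card q"
  shows "\<Phi> f = 0"
proof (cases "I = {}")
  case True
  then show ?thesis
    unfolding trace_form_def by simp
next
  case False
  have "poly f (b ^ q) = poly f b ^ q" for b
    using poly_frobenius_q[OF f, of b 1] by simp
  then obtain L where L: "\<forall>i. coeff L i \<in> subfield_of_card q"
      "\<forall>b\<in>(\<Union>i\<in>I. orbit i). poly L b = poly f b" "degree L < d"
    using orbit_interpolation_exists[where \<phi> = "poly f", OF _ False] by blast
  have "poly L (\<alpha> i) = poly f (\<alpha> i)" if "i \<in> I" for i
    using L(2) that in_frob_orbit_self by blast
  then have "\<Phi> f = \<Phi> L"
    unfolding trace_form_def by (intro sum.cong) simp_all
  also have "\<dots> = 0"
    using trace_form_eq_0_if_degree_less[OF vanish L(1,3)] .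
  finally show ?thesis .
qed

theorem trace_form_eq_0_on_lower_iff:
  "(\<forall>g\<in>Fd'_lower p q d. \<Phi> g = 0) \<longleftrightarrow> (\<forall>j\<in>I. (of_int (class_weight j) :: 'a) = 0)"
proof
  assume "\<forall>g\<in>Fd'_lower p q d. \<Phi> g = 0"
  then have "\<Phi> f = 0" if "\<forall>i. coeff f i \<in> subfield_of_card q" for f
    using trace_form_eq_0_if_eq_0_on_lower that by blast
  then show "\<forall>j\<in>I. (of_int (class_weight j) :: 'a) = 0"
    using class_weight_eq_0_if_trace_form_eq_0 by blast
next
  assume "\<forall>j\<in>I. (of_int (class_weight j) :: 'a) = 0"
  then show "\<forall>g\<in>Fd'_lower p q d. \<Phi> g = 0"
    using trace_form_eq_0_if_class_weights_eq_0 unfolding Fd'_lower_def by simp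
qed

lemma class_weight_eq_minpoly:
  assumes "j \<in> I"
  shows "class_weight j = (\<Sum>i\<in>I.
    if minpoly_over (subfield_of_card q) (\<alpha> i) = minpoly_over (subfield_of_card q) (\<alpha> j)
    then c i * int (k i div degree (minpoly_over (subfield_of_card q) (\<alpha> i))) else 0)"
  unfolding class_weight_def using minpoly_eq_iff_orbit_eq degree_minpoly assms
  by (intro sum.cong) simp_all

lemma Fd'_lower_add:
  fixes g h :: "'a poly"
  shows "g \<in> Fd'_lower p q d \<Longrightarrow> h \<in> Fd'_lower p q d \<Longrightarrow> g + h \<in> Fd'_lower p q d"
  unfolding Fd'_lower_def
  by (auto intro: degree_add_less simp: power_q_add)

lemma Fd'_lower_diff:
  fixes g h :: "'a poly"
  shows "g \<in> Fd'_lower p q d \<Longrightarrow> h \<in> Fd'_lower p q d \<Longrightarrow> g - h \<in> Fd'_lower p q d"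
  unfolding Fd'_lower_def
  by (auto intro: degree_diff_less simp: power_q_diff)

lemma Fd'_lower_smult:
  fixes g :: "'a poly"
  assumes "g \<in> Fd'_lower p q d" and "w ^ p = w"
  shows "smult w g \<in> Fd'_lower p q d"
proof -
  have "w ^ q = w"
    using power_power_fixed[OF assms(2)] q_eq by simp
  then show ?thesis
    using assms(1) unfolding Fd'_lower_def
    by (auto simp: power_mult_distrib intro: le_less_trans[OF degree_smult_le])
qed

lemma zero_in_Fd'_lower: "(0 :: 'a poly) \<in> Fd'_lower p q d"
  unfolding Fd'_lower_def using d_pos q_pos by (simp add: power_0_left)

lemma finite_Fd'_lower: "finite (Fd'_lower p q d :: 'a poly set)"
  using finite_degree_less by (rule finite_subset[rotated]) (auto simp: Fd'_lower_def)

end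

section \<open>Averaging an additive character over \<open>F_d'\<close>\<close>

locale character_average_setting = trace_form_setting p q r n d I k \<alpha> c
  for p q r n d :: nat and I :: "'i set" and k :: "'i \<Rightarrow> nat"
    and \<alpha> :: "'i \<Rightarrow> 'a::{finite,field}" and c :: "'i \<Rightarrow> int" +
  fixes \<psi> :: "'a \<Rightarrow> complex"
  assumes nontriv_\<psi>: "nontriv_add_char p \<psi>" and p_not_dvd_d: "\<not> p dvd d"
begin

lemma \<psi>_add: "x ^ p = x \<Longrightarrow> y ^ p = y \<Longrightarrow> \<psi> (x + y) = \<psi> x * \<psi> y"
  using nontriv_\<psi> unfolding nontriv_add_char_def by simp

lemma \<psi>_0: "\<psi> 0 = 1"
proof -
  have zero: "(0::'a) ^ p = 0"
    using prime_gt_0_nat[OF prime_p] by (simp add: power_0_left)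
  then have "\<psi> 0 = \<psi> 0 * \<psi> 0"
    using \<psi>_add[OF zero zero] by simp
  moreover have "\<psi> 0 \<noteq> 0"
    using nontriv_\<psi> zero unfolding nontriv_add_char_def by simp
  ultimately show ?thesis
    by simp
qed

lemma monom_add_in_Fd':
  fixes g :: "'a poly"
  assumes "a \<in> subfield_of_card q - {0}" and "g \<in> Fd'_lower p q d"
  shows "monom a d + g \<in> Fd' p q d"
proof -
  have "degree (monom a d + g) = d"
    using assms by (subst degree_add_eq_left) (simp_all add: degree_monom_eq Fd'_lower_def)
  moreover have "coeff (monom a d) i ^ q = coeff (monom a d) i" for i
    using assms(1) q_pos by (simp add: coeff_monom power_0_left)
  moreover have "d \<noteq> p * l" for l
    using p_not_dvd_d by auto
  ultimately show ?thesis
    using assms(2) unfolding Fd'_def Fd'_lower_def by (simp add: power_q_add)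
qed

lemma Fd'_decompose:
  fixes f :: "'a poly"
  assumes "f \<in> Fd' p q d"
  shows "lead_coeff f \<in> subfield_of_card q - {0}" and "f - monom (lead_coeff f) d \<in> Fd'_lower p q d"
proof -
  have "degree f = d" and f_coeffs: "\<forall>i. coeff f i \<in> subfield_of_card q"
    using assms unfolding Fd'_def by auto
  then show lead: "lead_coeff f \<in> subfield_of_card q - {0}"
    using d_pos by auto
  have "degree (f - monom (lead_coeff f) d) < d"
    using \<open>degree f = d\<close> d_pos by (intro degree_lessI) (auto simp: coeff_monom coeff_eq_0)
  moreover have "coeff (f - monom (lead_coeff f) d) i \<in> subfield_of_card q" for i
  proof -
    have "coeff (monom (lead_coeff f) d) i \<in> subfield_of_card q"
      using lead q_pos by (simp add: coeff_monom power_0_left)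
    then show ?thesis
      using f_coeffs by (simp add: power_q_diff)
  qed
  moreover have "d \<noteq> p * l" for l
    using p_not_dvd_d by auto
  ultimately show "f - monom (lead_coeff f) d \<in> Fd'_lower p q d"
    using assms q_pos unfolding Fd'_def Fd'_lower_def by (simp add: coeff_monom)
qed

lemma bij_betw_Fd':
  "bij_betw (\<lambda>(a, g). monom a d + g) ((subfield_of_card q - {0}) \<times> Fd'_lower p q d)
    (Fd' p q d :: 'a poly set)"
proof -
  have lead: "lead_coeff (monom a d + g) = a"
    if "a \<in> subfield_of_card q - {0}" "g \<in> Fd'_lower p q d" for a :: 'a and g
  proof -
    have "degree (monom a d + g) = d"
      using monom_add_in_Fd'[OF that] unfolding Fd'_def by blast
    moreover have "coeff g d = 0"
      using that(2) by (simp add: Fd'_lower_def coeff_eq_0)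
    ultimately show ?thesis
      by simp
  qed
  show ?thesis
    by (rule bij_betw_byWitness[where f' = "\<lambda>f. (lead_coeff f, f - monom (lead_coeff f) d)"])
      (use lead monom_add_in_Fd' Fd'_decompose in \<open>auto simp del: mem_subfield_of_card_iff\<close>)
qed

lemma sum_Fd'_lower_eq_0:
  assumes "\<exists>g\<in>Fd'_lower p q d. \<Phi> g \<noteq> 0"
  shows "(\<Sum>g\<in>Fd'_lower p q d. \<psi> (\<Phi> g)) = 0"
proof -
  obtain g0 where g0: "g0 \<in> Fd'_lower p q d" "\<Phi> g0 \<noteq> 0"
    using assms by blast
  have in_prime_field: "\<Phi> g ^ p = \<Phi> g" if "g \<in> Fd'_lower p q d" for g
    using trace_form_in_prime_field that unfolding Fd'_lower_def by blast
  obtain x0 where x0: "x0 ^ p = x0" "\<psi> x0 \<noteq> 1"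
    using nontriv_\<psi> unfolding nontriv_add_char_def by auto
  \<comment> \<open>scaling g0 by an element of the prime field reaches a value on which \<psi> is nontrivial\<close>
  define w where "w = x0 / \<Phi> g0"
  have "w ^ p = w"
    unfolding w_def using x0(1) in_prime_field[OF g0(1)] by (simp add: power_divide)
  then have "smult w g0 \<in> Fd'_lower p q d" and "\<Phi> (smult w g0) = x0"
    using Fd'_lower_smult[OF g0(1)] trace_form_smult g0(2) by (simp_all add: w_def)
  then show ?thesis
    using sum_character_eq_0[OF finite_Fd'_lower Fd'_lower_add Fd'_lower_diff, of "\<lambda>g. \<psi> (\<Phi> g)"]
      \<psi>_add in_prime_field trace_form_add x0(2) by auto
qed

theorem avg_Fd'_trace_form:
  "avg_Fd' p q d (\<lambda>f. \<psi> (\<Phi> f)) = (if \<forall>g\<in>Fd'_lower p q d. \<Phi> g = 0 then 1 else 0)"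
proof -
  let ?A = "(subfield_of_card q - {0}) \<times> Fd'_lower p q d"
  have sum_Fd': "(\<Sum>f\<in>Fd' p q d. \<psi> (\<Phi> f)) = (\<Sum>(a, g)\<in>?A. \<psi> (\<Phi> (monom a d + g)))"
    using sum.reindex_bij_betw[OF bij_betw_Fd', of "\<lambda>f. \<psi> (\<Phi> f)"] by (simp add: case_prod_unfold)
  show ?thesis
  proof (cases "\<forall>g\<in>Fd'_lower p q d. \<Phi> g = 0")
    case True
    have "\<Phi> f = 0" if "f \<in> Fd' p q d" for f
      using trace_form_eq_0_if_eq_0_on_lower[OF True] that unfolding Fd'_def by blast
    then have "(\<Sum>f\<in>Fd' p q d. \<psi> (\<Phi> f)) = of_nat (card (Fd' p q d :: 'a poly set))"
      by (simp add: \<psi>_0)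
    moreover have "(Fd' p q d :: 'a poly set) \<noteq> {}"
      using monom_add_in_Fd'[of 1 0] zero_in_Fd'_lower by auto
    moreover have "finite (Fd' p q d :: 'a poly set)"
      using bij_betw_finite[OF bij_betw_Fd'] finite_Fd'_lower by (simp add: finite_cartesian_product_iff)
    ultimately show ?thesis
      using True unfolding avg_Fd'_def by simp
  next
    case False
    have mem: "\<Phi> (monom a d) ^ p = \<Phi> (monom a d)" "\<Phi> g ^ p = \<Phi> g"
      if "a \<in> subfield_of_card q" "g \<in> Fd'_lower p q d" for a g
      using trace_form_in_prime_field that q_pos
      unfolding Fd'_lower_def by (auto simp: coeff_monom power_0_left)
    have "(\<Sum>(a, g)\<in>?A. \<psi> (\<Phi> (monom a d + g)))
        = (\<Sum>a\<in>subfield_of_card q - {0}. \<Sum>g\<in>Fd'_lower p q d. \<psi> (\<Phi> (monom a d)) * \<psi> (\<Phi> g))"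
      unfolding sum.cartesian_product[symmetric] using mem
      by (intro sum.cong) (auto simp: trace_form_add \<psi>_add)
    also have "\<dots> = 0"
      using sum_Fd'_lower_eq_0 False by (simp add: sum_distrib_left[symmetric])
    finally show ?thesis
      using False sum_Fd' unfolding avg_Fd'_def by simp
  qed
qed

corollary avg_Fd'_eq_class_weights:
  "avg_Fd' p q d (\<lambda>f. \<psi> (\<Phi> f)) = (if \<forall>j\<in>I. int p dvd class_weight j then 1 else 0)"
  unfolding avg_Fd'_trace_form trace_form_eq_0_on_lower_iff of_int_eq_0_iff_char_dvd CHAR_eq ..

end

theorem lemma8p1:
  fixes p q r n d :: nat
    and \<psi> :: "'a::{finite,field} \<Rightarrow> complex"
    and h e :: "nat \<Rightarrow> int"
    and k :: "nat \<Rightarrow> nat"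
    and \<alpha> :: "nat \<Rightarrow> 'a"
  assumes "prime p" and "odd p"
    and "r > 0" and "q = p ^ r"
    and "card (UNIV :: 'a set) = q ^ n"
    and "d > 0" and "\<not> p dvd d"
    and "nontriv_add_char p \<psi>"
    and "\<not> int p dvd h 1 * h 2 * h 3"
    and "\<forall>i\<in>{1,2,3}. e i \<in> {-1, 1}"
    and "\<forall>i\<in>{1,2,3}. k i > 0"
    and "k 1 + k 2 + k 3 < d"
    and "\<forall>i\<in>{1,2,3}. k i dvd n"
    and "\<forall>i\<in>{1,2,3}. \<alpha> i \<in> subfield_of_card (q ^ k i)"
  defines "g \<equiv> \<lambda>i. minpoly_over (subfield_of_card q) (\<alpha> i)"
    and "u \<equiv> \<lambda>i. degree (minpoly_over (subfield_of_card q) (\<alpha> i))"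
    and "m \<equiv> avg_Fd' p q d (\<lambda>f. \<psi> (
            of_int (e 1 * h 1) * abs_tr p r (k 1) (poly f (\<alpha> 1))
          + of_int (e 2 * h 2) * abs_tr p r (k 2) (poly f (\<alpha> 2))
          + of_int (e 3 * h 3) * abs_tr p r (k 3) (poly f (\<alpha> 3))))"
  shows "m = (if
      (g 1 = g 2 \<and> g 2 = g 3 \<and>
         int p dvd ((e 1 * h 1 * int (k 1) + e 2 * h 2 * int (k 2) + e 3 * h 3 * int (k 3)) div int (u 1)) \<and>
         \<not> p dvd ((k 1 * k 2 * k 3) div (u 1 * u 2 * u 3)))
    \<or> (\<exists>j1 j2 j3. {j1, j2, j3} = {1, 2, 3::nat} \<and> g j1 = g j2 \<and>
         int p dvd ((e j1 * h j1 * int (k j1) + e j2 * h j2 * int (k j2)) div int (u j1)) \<and>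
         \<not> p dvd ((k j1 * k j2) div (u j1 * u j2)) \<and>
         p dvd (k j3 div u j3))
    \<or> (\<forall>i\<in>{1,2,3}. p dvd (k i div u i))
    then 1 else 0)"
proof -
  let ?c = "\<lambda>i. e i * h i"
  interpret character_average_setting p q r n d "{1, 2, 3}" k \<alpha> ?c \<psi>
    by unfold_locales (use assms in auto)
  interpret three_indices p g ?c k u
  proof
    show "\<not> int p dvd ?c i" if "i \<in> {1,2,3}" for i
      using assms(1,9,10) that by (auto simp: prime_dvd_mult_iff)
    show "u i dvd k i" "u i > 0" if "i \<in> {1,2,3}" for i
      using degree_minpoly period_dvd_k period_pos that unfolding u_def by simp_all
    show "u i = u j" if "i \<in> {1,2,3}" "j \<in> {1,2,3}" "g i = g j" for i j
      using degree_minpoly minpoly_eq_iff_orbit_eq card_orbit that unfolding g_def u_def by metis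
  qed (rule assms(1))
  have "m = avg_Fd' p q d (\<lambda>f. \<psi> (\<Phi> f))"
    unfolding m_def trace_form_def by (simp add: add.assoc)
  also have "\<dots> = (if \<forall>j\<in>{1,2,3}. int p dvd
      (\<Sum>i\<in>{1,2,3}. if g i = g j then ?c i * int (k i div u i) else 0) then 1 else 0)"
    unfolding avg_Fd'_eq_class_weights g_def u_def using class_weight_eq_minpoly by simp
  finally show ?thesis
    unfolding class_sums_dvd_iff .
qed

end
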